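(* Let $r\ge2$, $\alpha_1,\dots,\alpha_r>0$, $(\mathbb{X},\mathcal{X})$ a Polish space and $H_0$ a probability measure on $\mathbb{X}$. Let $G_i=\sum_{k\ge1}W_{ik}\delta_{\tilde\varphi_{0k}}$, $i=1,\dots,r$, where $(\tilde\varphi_{0k})_{k\ge1}$ are i.i.d. with law $H_0$, independent of the weights, $W_{ik}=S_{ik}\prod_{j<k}(1-S_{ij})$, and the vectors $(S_{1k},\dots,S_{rk})$, $k\ge1$, are i.i.d. with $S_{ik}=V_{0k}V_{1k}\cdots V_{r-i,k}$, where $V_{0k},\dots,V_{r-1,k}$ are independent, $V_{0k}\sim Beta(1,\alpha_1)$ and $V_{mk}\sim Beta(1+\alpha_1+\dots+\alpha_m,\alpha_{m+1})$ for $m=1,\dots,r-1$. Then for every $1\le i<j\le r$ and every measurable $A\subseteq\mathbb{X}$ with $0<H_0(A)<1$, \[ \mathrm{Cor}(G_i(A),G_j(A))=\frac{2\sqrt{1+\alpha_1+\dots+\alpha_{r-i+1}}\;(1+\alpha_1+\dots+\alpha_{r-j+1})^{3/2}}{2(1+\alpha_1+\dots+\alpha_{r-j+1})^2+(2+\alpha_1+\dots+\alpha_{r-j+1})(\alpha_{r-j+2}+\dots+\alpha_{r-i+1})}. \]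
   Context: $\delta_x$ is the Dirac mass at $x$; empty products equal $1$. All measures $G_i$ share the same atoms $\tilde\varphi_{0k}$. *)

theory Defs
  imports "HOL-Probability.Probability"
begin

definition beta_density :: "real \<Rightarrow> real \<Rightarrow> real \<Rightarrow> real" where
  "beta_density a b x =
     (if 0 < x \<and> x < 1 then x powr (a - 1) * (1 - x) powr (b - 1) / Beta a b else 0)"

definition correlation :: "'a measure \<Rightarrow> ('a \<Rightarrow> real) \<Rightarrow> ('a \<Rightarrow> real) \<Rightarrow> real" where
  "correlation M X Y =
     (\<integral>\<omega>. (X \<omega> - (\<integral>\<omega>'. X \<omega>' \<partial>M)) * (Y \<omega> - (\<integral>\<omega>'. Y \<omega>' \<partial>M)) \<partial>M)
     / sqrt ((\<integral>\<omega>. (X \<omega> - (\<integral>\<omega>'. X \<omega>' \<partial>M))\<^sup>2 \<partial>M) * (\<integral>\<omega>. (Y \<omega> - (\<integral>\<omega>'. Y \<omega>' \<partial>M))\<^sup>2 \<partial>M))"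

definition stick_S :: "nat \<Rightarrow> (nat \<Rightarrow> nat \<Rightarrow> 'a \<Rightarrow> real) \<Rightarrow> nat \<Rightarrow> nat \<Rightarrow> 'a \<Rightarrow> real" where
  "stick_S r V i k \<omega> = (\<Prod>m\<in>{0..r - i}. V m k \<omega>)"

definition stick_W :: "nat \<Rightarrow> (nat \<Rightarrow> nat \<Rightarrow> 'a \<Rightarrow> real) \<Rightarrow> nat \<Rightarrow> nat \<Rightarrow> 'a \<Rightarrow> real" where
  "stick_W r V i k \<omega> = stick_S r V i k \<omega> * (\<Prod>j<k. 1 - stick_S r V i j \<omega>)"

definition G_meas :: "nat \<Rightarrow> (nat \<Rightarrow> nat \<Rightarrow> 'a \<Rightarrow> real) \<Rightarrow> (nat \<Rightarrow> 'a \<Rightarrow> 'b) \<Rightarrow> nat \<Rightarrow> 'b set \<Rightarrow> 'a \<Rightarrow> real" where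
  "G_meas r V \<phi> i A \<omega> = (\<Sum>k. stick_W r V i k \<omega> * indicator A (\<phi> k \<omega>))"

end

theory Submission
  imports Defs
begin

text \<open>
  The Beta variables lie in (0,1) almost surely, so after clamping them into [0,1] all
  variables of the model form one independent family of [0,1]-valued random variables.
  Write \<sigma>(i) = \<alpha>(1) + ... + \<alpha>(r-i+1). The Beta means telescope to E S(i,k) = 1/(1+\<sigma>(i)),
  and for i \<le> j the second moments of the shared factors give
  E[S(i,k) S(j,k)] = 2/((1+\<sigma>(i))(2+\<sigma>(j))). Since the expected product of the first n
  factors 1 - S(i,c) is (\<sigma>(i)/(1+\<sigma>(i)))^n, the weights sum to 1 almost surely, so
  G(i) = p + D(i) with p = H0(A) and D(i) = \<Sum>k W(i,k) (1[\<phi>(k) \<in> A] - p).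
  In E[D(i) D(j)] the terms with k \<noteq> l vanish, because the centred indicator of one atom
  is independent of everything else in the term; the diagonal terms form the geometric series
  p(1-p) \<Sum>k E[(1-S(i,k))(1-S(j,k))]^k E[S(i,k) S(j,k)], and the correlation is then
  a computation.
\<close>

section \<open>Stick-breaking weights\<close>

definition stick_weight :: "(nat \<Rightarrow> real) \<Rightarrow> nat \<Rightarrow> real" where
  "stick_weight s k = s k * (\<Prod>j<k. 1 - s j)"

lemma sum_stick_weight: "(\<Sum>k<n. stick_weight s k) = 1 - (\<Prod>j<n. 1 - s j)"
  by (induction n) (simp_all add: stick_weight_def algebra_simps)

lemma stick_weight_cong: "(\<And>c. c \<le> k \<Longrightarrow> s c = s' c) \<Longrightarrow> stick_weight s k = stick_weight s' k"
  unfolding stick_weight_def by (intro arg_cong2[where f = "(*)"] prod.cong) auto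

lemma borel_measurable_stick_weight:
  "(\<And>c. c \<le> k \<Longrightarrow> (\<lambda>x. s c x) \<in> borel_measurable N) \<Longrightarrow>
    (\<lambda>x. stick_weight (\<lambda>c. s c x) k) \<in> borel_measurable N"
  unfolding stick_weight_def
  by (intro borel_measurable_times borel_measurable_prod borel_measurable_diff borel_measurable_const) auto

context
  fixes s :: "nat \<Rightarrow> real"
  assumes s_nonneg: "\<And>k. 0 \<le> s k" and s_le_1: "\<And>k. s k \<le> 1"
begin

lemma prod_one_minus_bounds: "0 \<le> (\<Prod>j<k. 1 - s j)" "(\<Prod>j<k. 1 - s j) \<le> 1"
  using s_nonneg s_le_1 by (auto intro!: prod_nonneg prod_le_1)

lemma stick_weight_nonneg: "0 \<le> stick_weight s k"
  unfolding stick_weight_def using s_nonneg prod_one_minus_bounds by simp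

lemma stick_weight_le_1: "stick_weight s k \<le> 1"
  unfolding stick_weight_def using s_nonneg s_le_1 prod_one_minus_bounds by (intro mult_le_one) auto

lemma sum_stick_weight_le_1: "(\<Sum>k<n. stick_weight s k) \<le> 1"
  using prod_one_minus_bounds by (simp add: sum_stick_weight)

lemma summable_stick_weight: "summable (stick_weight s)"
  by (rule summableI_nonneg_bounded[where x=1]) (use stick_weight_nonneg sum_stick_weight_le_1 in auto)

lemma summable_stick_weight_mult:
  "(\<And>k. \<bar>b k\<bar> \<le> 1) \<Longrightarrow> summable (\<lambda>k. stick_weight s k * b k)"
  by (rule summable_comparison_test'[OF summable_stick_weight, where N=0])
     (auto simp: abs_mult stick_weight_nonneg intro: mult_right_le_one_le)

lemma suminf_stick_weight_bounds: "0 \<le> (\<Sum>k. stick_weight s k)" "(\<Sum>k. stick_weight s k) \<le> 1"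
  using suminf_nonneg[OF summable_stick_weight] suminf_le_const[OF summable_stick_weight]
  by (auto simp: stick_weight_nonneg sum_stick_weight_le_1)

lemma abs_sum_stick_weight_mult_le_1:
  assumes b: "\<And>k. \<bar>b k\<bar> \<le> 1"
  shows "\<bar>\<Sum>k<n. stick_weight s k * b k\<bar> \<le> 1"
proof -
  have "\<bar>\<Sum>k<n. stick_weight s k * b k\<bar> \<le> (\<Sum>k<n. stick_weight s k)"
    by (rule order_trans[OF sum_abs sum_mono])
       (use b in \<open>auto simp: abs_mult stick_weight_nonneg intro: mult_right_le_one_le\<close>)
  with sum_stick_weight_le_1[of n] show ?thesis by linarith
qed

end

text \<open>Coordinates of the model: \<open>Inl (m, k)\<close> stands for V m k and \<open>Inr k\<close> for the atom \<phi> k.\<close>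
type_synonym coord = "(nat \<times> nat) + nat"

definition stick_frac :: "nat \<Rightarrow> nat \<Rightarrow> nat \<Rightarrow> (coord \<Rightarrow> real) \<Rightarrow> real" where
  "stick_frac r i k x = (\<Prod>m\<in>{0..r - i}. x (Inl (m, k)))"

lemma stick_frac_bounds:
  "(\<And>t. 0 \<le> x t \<and> x t \<le> 1) \<Longrightarrow> 0 \<le> stick_frac r i k x \<and> stick_frac r i k x \<le> 1"
  unfolding stick_frac_def by (auto intro!: prod_nonneg prod_le_1)

lemma stick_frac_restrict:
  "(\<And>m. m \<le> r - i \<Longrightarrow> Inl (m, k) \<in> J) \<Longrightarrow> stick_frac r i k (restrict x J) = stick_frac r i k x"
  unfolding stick_frac_def by (intro prod.cong) auto

lemma borel_measurable_stick_frac: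
  "(\<And>m. m \<le> r - i \<Longrightarrow> Inl (m, k) \<in> J) \<Longrightarrow>
    stick_frac r i k \<in> borel_measurable (PiM J (\<lambda>_. borel))"
  unfolding stick_frac_def by (intro borel_measurable_prod measurable_component_singleton) auto

definition coord_weight :: "nat \<Rightarrow> nat \<Rightarrow> nat \<Rightarrow> (coord \<Rightarrow> real) \<Rightarrow> real" where
  "coord_weight r i k x = stick_weight (\<lambda>c. stick_frac r i c x) k"

lemma coord_weight_restrict:
  "(\<And>m c. m \<le> r - i \<Longrightarrow> c \<le> k \<Longrightarrow> Inl (m, c) \<in> J) \<Longrightarrow>
    coord_weight r i k (restrict x J) = coord_weight r i k x"
  unfolding coord_weight_def by (intro stick_weight_cong stick_frac_restrict) auto

lemma borel_measurable_coord_weight: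
  "(\<And>m c. m \<le> r - i \<Longrightarrow> c \<le> k \<Longrightarrow> Inl (m, c) \<in> J) \<Longrightarrow>
    coord_weight r i k \<in> borel_measurable (PiM J (\<lambda>_. borel))"
  unfolding coord_weight_def[abs_def]
  by (intro borel_measurable_stick_weight borel_measurable_stick_frac) auto

lemma stick_W_eq_stick_weight: "stick_W r V i k \<omega> = stick_weight (\<lambda>c. stick_S r V i c \<omega>) k"
  by (simp add: stick_W_def stick_weight_def)

section \<open>Moments of the Beta distribution\<close>

definition clamp01 :: "real \<Rightarrow> real" where
  "clamp01 x = max 0 (min 1 x)"

lemma borel_measurable_clamp01 [measurable]: "clamp01 \<in> borel_measurable borel"
  unfolding clamp01_def by measurable

lemma clamp01_bounds [simp]: "0 \<le> clamp01 x" "clamp01 x \<le> 1"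
  by (auto simp: clamp01_def)

lemma Beta_real_pos: "0 < a \<Longrightarrow> 0 < b \<Longrightarrow> 0 < Beta a (b::real)"
  by (simp add: Beta_def)

lemma Beta_plus1_left_ratio:
  fixes a b :: real assumes a: "0 < a" and b: "0 < b"
  shows "Beta (a + 1) b / Beta a b = a / (a + b)"
proof -
  have "a \<notin> \<int>\<^sub>\<le>\<^sub>0" using a nonpos_Ints_nonpos by force
  from Beta_plus1_left[OF this, of b] have "Beta (a + 1) b = a * Beta a b / (a + b)"
    using a b by (simp add: field_simps)
  then show ?thesis using Beta_real_pos[OF a b] by simp
qed

lemma Beta_plus2_left_ratio:
  fixes a b :: real assumes a: "0 < a" and b: "0 < b"
  shows "Beta (a + 2) b / Beta a b = a * (a + 1) / ((a + b) * (a + b + 1))"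
proof -
  have "Beta (a + 2) b / Beta a b = Beta ((a + 1) + 1) b / Beta (a + 1) b * (Beta (a + 1) b / Beta a b)"
    using Beta_real_pos[of "a + 1" b] a b by (simp add: add.assoc)
  also have "\<dots> = (a + 1) / (a + 1 + b) * (a / (a + b))"
    using a b by (simp only: Beta_plus1_left_ratio)
  finally show ?thesis using a b by (simp add: field_simps)
qed

lemma integral_beta_density_clamp01_power:
  fixes a b :: real assumes a: "0 < a" and b: "0 < b"
  shows "(\<integral>x. beta_density a b x * clamp01 x ^ n \<partial>lborel) = Beta (a + n) b / Beta a b"
proof -
  let ?f = "\<lambda>x. x powr (a + n - 1) * (1 - x) powr (b - 1) / Beta a b"
  have B: "0 < Beta a b" using Beta_real_pos a b by simp
  have eq: "beta_density a b x * clamp01 x ^ n = indicator {0<..<1} x * ?f x" for x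
  proof (cases "0 < x \<and> x < 1")
    case True
    then have "x powr (a - 1) * x ^ n = x powr (a + n - 1)"
      by (simp add: powr_realpow[symmetric] powr_add[symmetric] algebra_simps)
    then show ?thesis using True by (simp add: beta_density_def clamp01_def field_simps)
  qed (auto simp: beta_density_def)
  have "((\<lambda>x. x powr (a + n - 1) * (1 - x) powr (b - 1)) has_integral Beta (a + n) b) {0<..<1}"
    using has_integral_Beta_real[of "a + n" b] a b by (simp add: has_integral_Icc_iff_Ioo)
  from has_integral_divide[OF this, of "Beta a b"]
  have "(\<integral>\<^sup>+x. ennreal (indicator {0<..<1} x * ?f x) \<partial>lborel) = ennreal (Beta (a + n) b / Beta a b)"
    by (rule nn_integral_has_integral_lebesgue[rotated]) (use B in auto)
  moreover have "(\<integral>x. indicator {0<..<1} x * ?f x \<partial>lborel) =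
      enn2real (\<integral>\<^sup>+x. ennreal (indicator {0<..<1} x * ?f x) \<partial>lborel)"
    by (rule integral_eq_nn_integral) (auto simp: B indicator_def intro!: AE_I2 divide_nonneg_pos)
  ultimately show ?thesis
    using B a b Beta_real_pos[of "a + n" b] by (simp add: eq)
qed

lemma (in prob_space) distributed_beta_moment:
  assumes a: "0 < a" and b: "0 < b"
    and X: "distributed M lborel X (\<lambda>x. ennreal (beta_density a b x))"
  shows "(\<integral>\<omega>. clamp01 (X \<omega>) ^ n \<partial>M) = Beta (a + n) b / Beta a b"
proof -
  have "(\<integral>\<omega>. clamp01 (X \<omega>) ^ n \<partial>M) = (\<integral>x. beta_density a b x * clamp01 x ^ n \<partial>lborel)"
    by (rule distributed_integral[OF X, symmetric])
       (auto simp: beta_density_def Beta_real_pos[OF a b] intro!: divide_nonneg_pos)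
  then show ?thesis using integral_beta_density_clamp01_power[OF a b] by simp
qed

lemma (in prob_space) distributed_beta_AE_in_unit_interval:
  assumes X: "distributed M lborel X (\<lambda>x. ennreal (beta_density a b x))"
  shows "AE \<omega> in M. 0 < X \<omega> \<and> X \<omega> < 1"
proof -
  have "emeasure M (X -` (- {0<..<1}) \<inter> space M) =
      (\<integral>\<^sup>+x. ennreal (beta_density a b x) * indicator (- {0<..<1}) x \<partial>lborel)"
    by (rule distributed_emeasure[OF X]) auto
  also have "(\<lambda>x. ennreal (beta_density a b x) * indicator (- {0<..<1}) x) = (\<lambda>x. 0)"
    by (auto simp: beta_density_def indicator_def fun_eq_iff)
  finally show ?thesis
    by (intro AE_I[where N="X -` (- {0<..<1}) \<inter> space M"])
       (auto intro!: measurable_sets[OF distributed_measurable[OF X]])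
qed

lemma (in prob_space) indep_vars_integral_prod_blocks:
  fixes Y :: "'i \<Rightarrow> 'a \<Rightarrow> real" and J :: "'k \<Rightarrow> 'i set" and f :: "'k \<Rightarrow> ('i \<Rightarrow> real) \<Rightarrow> real"
  assumes Y: "indep_vars (\<lambda>_. borel) Y I"
    and K: "finite K" "disjoint_family_on J K" "\<And>k. k \<in> K \<Longrightarrow> J k \<subseteq> I"
    and f_meas: "\<And>k. k \<in> K \<Longrightarrow> f k \<in> borel_measurable (PiM (J k) (\<lambda>_. borel))"
    and f_restrict: "\<And>k y. k \<in> K \<Longrightarrow> f k (restrict y (J k)) = f k y"
    and f_bounded: "\<And>k \<omega>. k \<in> K \<Longrightarrow> \<omega> \<in> space M \<Longrightarrow> \<bar>f k (\<lambda>t. Y t \<omega>)\<bar> \<le> 1"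
  shows "(\<integral>\<omega>. (\<Prod>k\<in>K. f k (\<lambda>t. Y t \<omega>)) \<partial>M) = (\<Prod>k\<in>K. \<integral>\<omega>. f k (\<lambda>t. Y t \<omega>) \<partial>M)"
proof -
  have blocks: "indep_vars (\<lambda>k. PiM (J k) (\<lambda>_. borel)) (\<lambda>k \<omega>. restrict (\<lambda>t. Y t \<omega>) (J k)) K"
    by (rule indep_vars_restrict[OF Y K(3,2)])
  then have "indep_vars (\<lambda>_. borel) (\<lambda>k \<omega>. f k (restrict (\<lambda>t. Y t \<omega>) (J k))) K"
    by (rule indep_vars_compose2[OF _ f_meas])
  then have indep: "indep_vars (\<lambda>_. borel) (\<lambda>k \<omega>. f k (\<lambda>t. Y t \<omega>)) K"
    by (simp add: f_restrict cong: indep_vars_cong)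
  have "integrable M (\<lambda>\<omega>. f k (\<lambda>t. Y t \<omega>))" if k: "k \<in> K" for k
  proof (rule integrable_const_bound[where B=1])
    have "(\<lambda>\<omega>. restrict (\<lambda>t. Y t \<omega>) (J k)) \<in> measurable M (PiM (J k) (\<lambda>_. borel))"
      using blocks k unfolding indep_vars_def by auto
    from measurable_comp[OF this f_meas[OF k]]
    show "(\<lambda>\<omega>. f k (\<lambda>t. Y t \<omega>)) \<in> borel_measurable M" by (simp add: comp_def f_restrict k)
  qed (use f_bounded k in auto)
  then show ?thesis
    by (rule indep_vars_lebesgue_integral[OF K(1) indep])
qed

lemma (in prob_space) indep_vars_integral_mult_blocks:
  fixes Y :: "'i \<Rightarrow> 'a \<Rightarrow> real" and f g :: "('i \<Rightarrow> real) \<Rightarrow> real"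
  assumes Y: "indep_vars (\<lambda>_. borel) Y I"
    and J: "J \<inter> J' = {}" "J \<subseteq> I" "J' \<subseteq> I"
    and meas: "f \<in> borel_measurable (PiM J (\<lambda>_. borel))" "g \<in> borel_measurable (PiM J' (\<lambda>_. borel))"
    and restr: "\<And>y. f (restrict y J) = f y" "\<And>y. g (restrict y J') = g y"
    and bounded: "\<And>\<omega>. \<omega> \<in> space M \<Longrightarrow> \<bar>f (\<lambda>t. Y t \<omega>)\<bar> \<le> 1"
      "\<And>\<omega>. \<omega> \<in> space M \<Longrightarrow> \<bar>g (\<lambda>t. Y t \<omega>)\<bar> \<le> 1"
  shows "(\<integral>\<omega>. f (\<lambda>t. Y t \<omega>) * g (\<lambda>t. Y t \<omega>) \<partial>M) =
    (\<integral>\<omega>. f (\<lambda>t. Y t \<omega>) \<partial>M) * (\<integral>\<omega>. g (\<lambda>t. Y t \<omega>) \<partial>M)"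
proof -
  have "(\<integral>\<omega>. (\<Prod>b\<in>UNIV. (if b then f else g) (\<lambda>t. Y t \<omega>)) \<partial>M) =
      (\<Prod>b\<in>UNIV. \<integral>\<omega>. (if b then f else g) (\<lambda>t. Y t \<omega>) \<partial>M)"
    by (rule indep_vars_integral_prod_blocks[OF Y, where J="\<lambda>b. if b then J else J'"])
       (use assms in \<open>auto simp: disjoint_family_on_def restr[unfolded restrict_def]\<close>)
  then show ?thesis by (simp add: UNIV_bool mult.commute)
qed

lemma correlation_cong_AE:
  assumes "X \<in> borel_measurable M" "X' \<in> borel_measurable M"
    and "Y \<in> borel_measurable M" "Y' \<in> borel_measurable M"
    and "AE \<omega> in M. X \<omega> = X' \<omega>" "AE \<omega> in M. Y \<omega> = Y' \<omega>"
  shows "correlation M X Y = correlation M X' Y'"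
proof -
  have means: "(\<integral>\<omega>. X \<omega> \<partial>M) = (\<integral>\<omega>. X' \<omega> \<partial>M)" "(\<integral>\<omega>. Y \<omega> \<partial>M) = (\<integral>\<omega>. Y' \<omega> \<partial>M)"
    by (rule integral_cong_AE; use assms in auto)+
  have "(\<integral>\<omega>. (X \<omega> - (\<integral>\<omega>'. X \<omega>' \<partial>M)) * (Y \<omega> - (\<integral>\<omega>'. Y \<omega>' \<partial>M)) \<partial>M) =
      (\<integral>\<omega>. (X' \<omega> - (\<integral>\<omega>'. X' \<omega>' \<partial>M)) * (Y' \<omega> - (\<integral>\<omega>'. Y' \<omega>' \<partial>M)) \<partial>M)"
    "(\<integral>\<omega>. (X \<omega> - (\<integral>\<omega>'. X \<omega>' \<partial>M))\<^sup>2 \<partial>M) = (\<integral>\<omega>. (X' \<omega> - (\<integral>\<omega>'. X' \<omega>' \<partial>M))\<^sup>2 \<partial>M)"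
    "(\<integral>\<omega>. (Y \<omega> - (\<integral>\<omega>'. Y \<omega>' \<partial>M))\<^sup>2 \<partial>M) = (\<integral>\<omega>. (Y' \<omega> - (\<integral>\<omega>'. Y' \<omega>' \<partial>M))\<^sup>2 \<partial>M)"
    unfolding means by (rule integral_cong_AE; use assms in auto)+
  then show ?thesis
    unfolding correlation_def by simp
qed

lemma stick_covariance_ratio:
  fixes c d :: real assumes c: "0 < c" and d: "0 < d"
  shows "(2 / ((1 + d) * (2 + c))) / (1 - (1 - 1 / (1 + d) - 1 / (1 + c) + 2 / ((1 + d) * (2 + c))))
    = 2 * (1 + c) / (2 * (1 + c)\<^sup>2 + (2 + c) * (d - c))"
proof -
  \<comment> \<open>Abstracting 1 + c, 1 + d, 2 + c keeps field_simps from expanding the products into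
    polynomials whose nonvanishing it cannot see.\<close>
  have "(2 / (v * w)) / (1 - (1 - 1 / v - 1 / u + 2 / (v * w))) = 2 * u / (u * w + v * w - 2 * u)"
    if "0 < u" "0 < v" "0 < w" "u * w + v * w - 2 * u \<noteq> 0" for u v w :: real
  proof -
    have "1 - (1 - 1 / v - 1 / u + 2 / (v * w)) = (u * w + v * w - 2 * u) / (u * v * w)"
      using that by (simp add: field_simps)
    then show ?thesis using that by (simp add: field_simps)
  qed
  moreover let ?e = "(1 + c) * c + (1 + d) * (2 + c)"
  have den: "2 * (1 + c)\<^sup>2 + (2 + c) * (d - c) = ?e"
    by (simp add: power2_eq_square algebra_simps)
  have e_pos: "0 < ?e" using c d by (intro add_pos_pos mult_pos_pos) auto
  moreover have "?e = (1 + c) * (2 + c) + (1 + d) * (2 + c) - 2 * (1 + c)"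
    by (simp add: algebra_simps)
  ultimately show ?thesis unfolding den using c d e_pos by simp
qed

lemma correlation_closed_form:
  fixes q c d e :: real assumes q: "0 < q" and c: "0 < c" and d: "0 < d"
  shows "(q * (2 * (1 + c) / e)) / sqrt ((q * (1 / (1 + d))) * (q * (1 / (1 + c))))
       = 2 * sqrt (1 + d) * (1 + c) powr (3/2) / e"
proof -
  have "(q * (1 / (1 + d))) * (q * (1 / (1 + c))) = q\<^sup>2 / ((1 + d) * (1 + c))"
    by (simp add: power2_eq_square)
  then have sqrt_eq: "sqrt ((q * (1 / (1 + d))) * (q * (1 / (1 + c)))) = q / (sqrt (1 + d) * sqrt (1 + c))"
    using q c d by (simp add: real_sqrt_divide real_sqrt_mult)
  have "(1 + c) powr (3/2) = (1 + c) powr (1 + 1/2)" by simp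
  also have "\<dots> = (1 + c) * sqrt (1 + c)"
    using c by (simp only: powr_add) (simp add: powr_half_sqrt)
  finally have powr_eq: "(1 + c) powr (3/2) = (1 + c) * sqrt (1 + c)" .
  have "0 < sqrt (1 + d)" "0 < sqrt (1 + c)" using c d by auto
  then show ?thesis unfolding sqrt_eq powr_eq using q by (cases "e = 0") (auto simp: field_simps)
qed

section \<open>The model\<close>

locale dependent_stick_breaking = prob_space M for M :: "'a measure" +
  fixes H0 :: "'b measure" and r :: nat and \<alpha> :: "nat \<Rightarrow> real"
    and V :: "nat \<Rightarrow> nat \<Rightarrow> 'a \<Rightarrow> real" and \<phi> :: "nat \<Rightarrow> 'a \<Rightarrow> 'b" and A :: "'b set"
  assumes r_pos: "0 < r"
    and \<alpha>_pos: "\<And>l. l \<in> {1..r} \<Longrightarrow> \<alpha> l > 0"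
    and H0: "prob_space H0"
    and V_meas: "\<And>m k. m < r \<Longrightarrow> V m k \<in> borel_measurable M"
    and V_beta: "\<And>m k. m < r \<Longrightarrow>
        distributed M lborel (V m k)
          (\<lambda>x. ennreal (beta_density (1 + (\<Sum>l=1..m. \<alpha> l)) (\<alpha> (m + 1)) x))"
    and \<phi>_meas: "\<And>k. \<phi> k \<in> measurable M H0"
    and \<phi>_law: "\<And>k. distr M H0 (\<phi> k) = H0"
    and indep: "indep_sets
        (case_sum
           (\<lambda>(m, k). sigma_sets (space M) {V m k -` B \<inter> space M | B. B \<in> sets borel})
           (\<lambda>k. sigma_sets (space M) {\<phi> k -` B \<inter> space M | B. B \<in> sets H0}))
        (({..<r} \<times> UNIV) <+> UNIV)"
    and A_sets: "A \<in> sets H0"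
begin

definition p :: real where
  "p = measure H0 A"

definition alpha_sum :: "nat \<Rightarrow> real" where
  "alpha_sum n = (\<Sum>l=1..n. \<alpha> l)"

text \<open>\<open>conc i\<close> is \<alpha>(1) + ... + \<alpha>(r-i+1), the \<sigma>(i) of the closed forms.\<close>
definition conc :: "nat \<Rightarrow> real" where
  "conc i = alpha_sum (Suc (r - i))"

definition coords :: "coord set" where
  "coords = ({..<r} \<times> UNIV) <+> UNIV"

definition Y :: "coord \<Rightarrow> 'a \<Rightarrow> real" where
  "Y = case_sum (\<lambda>(m, k) \<omega>. clamp01 (V m k \<omega>)) (\<lambda>k \<omega>. indicator A (\<phi> k \<omega>))"

definition S :: "nat \<Rightarrow> nat \<Rightarrow> 'a \<Rightarrow> real" where
  "S i k \<omega> = stick_frac r i k (\<lambda>t. Y t \<omega>)"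

definition W :: "nat \<Rightarrow> nat \<Rightarrow> 'a \<Rightarrow> real" where
  "W i k \<omega> = stick_weight (\<lambda>c. S i c \<omega>) k"

definition G :: "nat \<Rightarrow> 'a \<Rightarrow> real" where
  "G i \<omega> = (\<Sum>k. W i k \<omega> * Y (Inr k) \<omega>)"

definition D :: "nat \<Rightarrow> 'a \<Rightarrow> real" where
  "D i \<omega> = (\<Sum>k. W i k \<omega> * (Y (Inr k) \<omega> - p))"

definition column :: "nat \<Rightarrow> coord set" where
  "column c = Inl ` ({..<r} \<times> {c})"

definition columns_upto :: "nat \<Rightarrow> coord set" where
  "columns_upto k = Inl ` ({..<r} \<times> {..k})"

lemma Y_bounds: "0 \<le> Y t \<omega>" "Y t \<omega> \<le> 1"
  by (auto simp: Y_def split: sum.split)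

lemma p_bounds: "0 \<le> p" "p \<le> 1"
  using prob_space.prob_le_1[OF H0] by (auto simp: p_def)

lemma abs_Y_centered_le_1: "\<bar>Y (Inr k) \<omega> - p\<bar> \<le> 1"
  using Y_bounds[of "Inr k" \<omega>] p_bounds by (auto simp: abs_le_iff)

lemma Inr_in_coords: "Inr k \<in> coords"
  and column_subset_coords: "column c \<subseteq> coords"
  and columns_upto_subset_coords: "columns_upto k \<subseteq> coords"
  by (auto simp: coords_def column_def columns_upto_def)

lemma Inr_notin_columns_upto: "Inr l \<notin> columns_upto k"
  by (auto simp: columns_upto_def)

lemma Inl_in_column: "1 \<le> i \<Longrightarrow> m \<le> r - i \<Longrightarrow> Inl (m, c) \<in> column c"
  and Inl_in_columns_upto: "1 \<le> i \<Longrightarrow> m \<le> r - i \<Longrightarrow> c \<le> k \<Longrightarrow> Inl (m, c) \<in> columns_upto k"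
  using r_pos by (auto simp: column_def columns_upto_def)

lemma disjoint_family_column: "disjoint_family_on column K"
  by (auto simp: disjoint_family_on_def column_def)

lemma borel_measurable_Y: "t \<in> coords \<Longrightarrow> Y t \<in> borel_measurable M"
  using V_meas measurable_compose[OF \<phi>_meas borel_measurable_indicator[OF A_sets]]
  by (auto simp: coords_def Y_def)

lemma indep_vars_Y: "indep_vars (\<lambda>_. borel) Y coords"
  unfolding indep_vars_def
proof (intro conjI ballI)
  show "random_variable borel (Y t)" if "t \<in> coords" for t
    using borel_measurable_Y[OF that] by simp
  show "indep_sets (\<lambda>t. sigma_sets (space M) {Y t -` B \<inter> space M |B. B \<in> sets borel}) coords"
    unfolding coords_def
  proof (rule indep_sets_mono_sets[OF indep])
    fix t :: coord
    show "sigma_sets (space M) {Y t -` B \<inter> space M |B. B \<in> sets borel} \<subseteq> case_sum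
        (\<lambda>(m, k). sigma_sets (space M) {V m k -` B \<inter> space M | B. B \<in> sets borel})
        (\<lambda>k. sigma_sets (space M) {\<phi> k -` B \<inter> space M | B. B \<in> sets H0}) t"
    proof (cases t)
      case (Inl mk)
      obtain m k where mk: "t = Inl (m, k)" using Inl by (cases mk) auto
      have "\<exists>B'. Y t -` B \<inter> space M = V m k -` B' \<inter> space M \<and> B' \<in> sets borel"
        if "B \<in> sets borel" for B
        using measurable_sets[OF borel_measurable_clamp01 that]
        by (intro exI[of _ "clamp01 -` B"]) (auto simp: Y_def mk)
      then show ?thesis unfolding mk by (auto intro!: sigma_sets_subseteq)
    next
      case (Inr k)
      have "\<exists>B'. Y t -` B \<inter> space M = \<phi> k -` B' \<inter> space M \<and> B' \<in> sets H0"
        if "B \<in> sets borel" for B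
        using measurable_sets[OF borel_measurable_indicator[OF A_sets] that] measurable_space[OF \<phi>_meas[of k]]
        by (intro exI[of _ "indicator A -` B \<inter> space H0"]) (auto simp: Y_def Inr)
      then show ?thesis unfolding Inr by (auto intro!: sigma_sets_subseteq)
    qed
  qed
qed

lemma borel_measurable_coord_fun:
  assumes "J \<subseteq> coords" "f \<in> borel_measurable (PiM J (\<lambda>_. borel))" "\<And>y. f (restrict y J) = f y"
  shows "(\<lambda>\<omega>. f (\<lambda>t. Y t \<omega>)) \<in> borel_measurable M"
proof -
  have "(\<lambda>\<omega>. restrict (\<lambda>t. Y t \<omega>) J) \<in> measurable M (PiM J (\<lambda>_. borel))"
    using assms(1) by (intro measurable_restrict borel_measurable_Y) auto
  from measurable_comp[OF this assms(2)] show ?thesis by (simp add: comp_def assms(3))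
qed

lemma integrable_bounded_by_1:
  "(f::'a \<Rightarrow> real) \<in> borel_measurable M \<Longrightarrow> (\<And>\<omega>. \<bar>f \<omega>\<bar> \<le> 1) \<Longrightarrow> integrable M f"
  by (rule integrable_const_bound[where B=1]) auto

lemma alpha_sum_nonneg: "m \<le> r \<Longrightarrow> 0 \<le> alpha_sum m"
  unfolding alpha_sum_def using \<alpha>_pos by (intro sum_nonneg) (auto simp: less_imp_le)

lemma alpha_sum_0 [simp]: "alpha_sum 0 = 0"
  by (simp add: alpha_sum_def)

lemma conc_pos:
  assumes "1 \<le> i" "i \<le> r"
  shows "0 < conc i"
proof -
  have "0 \<le> alpha_sum (r - i)" "0 < \<alpha> (Suc (r - i))"
    using assms alpha_sum_nonneg \<alpha>_pos by auto
  then show ?thesis by (simp add: conc_def alpha_sum_def)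
qed

lemma conc_eq: "conc i = (\<Sum>l=1..r-i+1. \<alpha> l)"
  by (simp add: conc_def alpha_sum_def)

lemma conc_diff:
  assumes "i \<le> j" "j \<le> r"
  shows "conc i - conc j = (\<Sum>l=r-j+2..r-i+1. \<alpha> l)"
proof -
  have "{1..r-i+1} = {1..r-j+1} \<union> {r-j+2..r-i+1}" using assms by auto
  moreover have "{1..r-j+1} \<inter> {r-j+2..r-i+1} = {}" by auto
  ultimately show ?thesis by (simp add: conc_eq sum.union_disjoint)
qed

lemma S_bounds: "0 \<le> S i k \<omega>" "S i k \<omega> \<le> 1"
  using stick_frac_bounds[of "\<lambda>t. Y t \<omega>"] Y_bounds by (auto simp: S_def)

lemma W_bounds: "0 \<le> W i k \<omega>" "W i k \<omega> \<le> 1"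
  unfolding W_def using S_bounds by (auto intro: stick_weight_nonneg stick_weight_le_1)

lemma borel_measurable_stick_frac_column:
  "1 \<le> i \<Longrightarrow> stick_frac r i c \<in> borel_measurable (PiM (column c) (\<lambda>_. borel))"
  by (rule borel_measurable_stick_frac) (rule Inl_in_column)

lemma stick_frac_restrict_column: "1 \<le> i \<Longrightarrow> stick_frac r i c (restrict y (column c)) = stick_frac r i c y"
  by (rule stick_frac_restrict) (rule Inl_in_column)

lemma coord_weight_restrict_columns_upto:
  "1 \<le> i \<Longrightarrow> b \<le> k \<Longrightarrow> coord_weight r i b (restrict y (columns_upto k)) = coord_weight r i b y"
  by (rule coord_weight_restrict) (auto intro: Inl_in_columns_upto)

lemma borel_measurable_coord_weight_columns_upto:
  "1 \<le> i \<Longrightarrow> b \<le> k \<Longrightarrow> coord_weight r i b \<in> borel_measurable (PiM (columns_upto k) (\<lambda>_. borel))"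
  by (rule borel_measurable_coord_weight) (auto intro: Inl_in_columns_upto)

lemma W_eq_coord_weight: "W i k \<omega> = coord_weight r i k (\<lambda>t. Y t \<omega>)"
  by (simp add: W_def S_def coord_weight_def)

lemma borel_measurable_S: "1 \<le> i \<Longrightarrow> S i c \<in> borel_measurable M"
  unfolding S_def[abs_def]
  by (rule borel_measurable_coord_fun[OF column_subset_coords borel_measurable_stick_frac_column stick_frac_restrict_column])

lemma borel_measurable_W: "1 \<le> i \<Longrightarrow> W i k \<in> borel_measurable M"
  unfolding W_def[abs_def] by (intro borel_measurable_stick_weight borel_measurable_S)

lemma borel_measurable_Y_Inr: "Y (Inr k) \<in> borel_measurable M"
  by (rule borel_measurable_Y[OF Inr_in_coords])

lemma integral_Y_Inl:
  assumes m: "m < r"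
  shows "(\<integral>\<omega>. Y (Inl (m, k)) \<omega> ^ n \<partial>M) =
    Beta (1 + alpha_sum m + n) (\<alpha> (m + 1)) / Beta (1 + alpha_sum m) (\<alpha> (m + 1))"
proof -
  have "0 < 1 + alpha_sum m" using alpha_sum_nonneg[of m] m by simp
  moreover have "0 < \<alpha> (m + 1)" using \<alpha>_pos m by auto
  ultimately show ?thesis
    using distributed_beta_moment[OF _ _ V_beta[OF m, of k, folded alpha_sum_def]]
    by (simp add: Y_def)
qed

lemma integral_Y_Inl_mean:
  "m < r \<Longrightarrow> (\<integral>\<omega>. Y (Inl (m, k)) \<omega> \<partial>M) = (1 + alpha_sum m) / (1 + alpha_sum (Suc m))"
  using integral_Y_Inl[of m k 1] Beta_plus1_left_ratio[of "1 + alpha_sum m" "\<alpha> (m + 1)"]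
    alpha_sum_nonneg[of m] \<alpha>_pos[of "m + 1"]
  by (simp add: alpha_sum_def add.assoc)

lemma integral_Y_Inl_second_moment:
  "m < r \<Longrightarrow> (\<integral>\<omega>. Y (Inl (m, k)) \<omega> ^ 2 \<partial>M) =
    (1 + alpha_sum m) / (1 + alpha_sum (Suc m)) * ((2 + alpha_sum m) / (2 + alpha_sum (Suc m)))"
  using integral_Y_Inl[of m k 2] Beta_plus2_left_ratio[of "1 + alpha_sum m" "\<alpha> (m + 1)"]
    alpha_sum_nonneg[of m] \<alpha>_pos[of "m + 1"]
  by (simp add: alpha_sum_def add.assoc add_ac field_simps)

lemma integral_prod_column_coords:
  fixes g :: "nat \<Rightarrow> real \<Rightarrow> real"
  assumes i: "1 \<le> i" and g_meas: "\<And>m. g m \<in> borel_measurable borel"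
    and g_bounded: "\<And>m x. 0 \<le> x \<Longrightarrow> x \<le> 1 \<Longrightarrow> \<bar>g m x\<bar> \<le> 1"
  shows "(\<integral>\<omega>. (\<Prod>m\<in>{0..r - i}. g m (Y (Inl (m, c)) \<omega>)) \<partial>M) =
    (\<Prod>m\<in>{0..r - i}. \<integral>\<omega>. g m (Y (Inl (m, c)) \<omega>) \<partial>M)"
proof (rule indep_vars_integral_prod_blocks[OF indep_vars_Y, where J="\<lambda>m. {Inl (m, c)}"
      and f="\<lambda>m x. g m (x (Inl (m, c)))"])
  show "\<bar>g m (Y (Inl (m, c)) \<omega>)\<bar> \<le> 1" for m \<omega>
    by (intro g_bounded Y_bounds)
qed (use i r_pos in \<open>auto simp: disjoint_family_on_def coords_def
      intro!: measurable_compose[OF _ g_meas] measurable_component_singleton\<close>)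

lemma telescope_alpha_sum:
  assumes "0 < x" "n < r"
  shows "(\<Prod>m\<in>{0..n}. (x + alpha_sum m) / (x + alpha_sum (Suc m))) = x / (x + alpha_sum (Suc n))"
proof -
  have "x + alpha_sum (Suc m) \<noteq> 0" if "m \<le> n" for m
    using alpha_sum_nonneg[of "Suc m"] that assms by simp
  then show ?thesis using prod_telescope[of n "\<lambda>m. x + alpha_sum m"] by (simp add: atLeast0AtMost)
qed

lemma integral_S: "1 \<le> i \<Longrightarrow> i \<le> r \<Longrightarrow> (\<integral>\<omega>. S i c \<omega> \<partial>M) = 1 / (1 + conc i)"
  using integral_prod_column_coords[of i "\<lambda>_ x. x" c] telescope_alpha_sum[of 1 "r - i"]
  by (simp add: S_def stick_frac_def integral_Y_Inl_mean conc_def alpha_sum_def)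

lemma integral_S_mult:
  assumes ij: "1 \<le> i" "i \<le> j" "j \<le> r"
  shows "(\<integral>\<omega>. S i c \<omega> * S j c \<omega> \<partial>M) = 2 / ((1 + conc i) * (2 + conc j))"
proof -
  let ?g = "\<lambda>m x. if m \<le> r - j then x ^ 2 else x :: real"
  have sub: "{m \<in> {0..r - i}. m \<le> r - j} = {0..r - j}" using ij by auto
  have prod_restrict: "(\<Prod>m\<in>{0..r - i}. if m \<le> r - j then f m else 1) = (\<Prod>m\<in>{0..r - j}. f m)"
    for f :: "nat \<Rightarrow> real"
    using prod.inter_filter[of "{0..r - i}" f "\<lambda>m. m \<le> r - j"] unfolding sub by simp
  have "S i c \<omega> * S j c \<omega> = (\<Prod>m\<in>{0..r - i}. ?g m (Y (Inl (m, c)) \<omega>))" for \<omega>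
    by (simp add: S_def stick_frac_def prod_restrict[symmetric] prod.distrib[symmetric]
        power2_eq_square if_distrib cong: if_cong)
  then have "(\<integral>\<omega>. S i c \<omega> * S j c \<omega> \<partial>M) = (\<Prod>m\<in>{0..r - i}. \<integral>\<omega>. ?g m (Y (Inl (m, c)) \<omega>) \<partial>M)"
    using integral_prod_column_coords[of i ?g c] ij by (simp add: abs_le_iff power_le_one)
  also have "\<dots> = (\<Prod>m\<in>{0..r - i}. (1 + alpha_sum m) / (1 + alpha_sum (Suc m)) *
      (if m \<le> r - j then (2 + alpha_sum m) / (2 + alpha_sum (Suc m)) else 1))"
    using ij by (intro prod.cong refl)
      (auto simp: integral_Y_Inl_mean integral_Y_Inl_second_moment)
  also have "\<dots> = 1 / (1 + conc i) * (2 / (2 + conc j))"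
    using ij telescope_alpha_sum[of 1 "r - i"] telescope_alpha_sum[of 2 "r - j"]
    by (simp only: prod.distrib prod_restrict) (simp add: conc_def alpha_sum_def)
  finally show ?thesis by simp
qed

text \<open>For i \<le> j, the means of S i k * S j k and of (1 - S i k) * (1 - S j k).\<close>
definition mean_SS :: "nat \<Rightarrow> nat \<Rightarrow> real" where
  "mean_SS i j = 2 / ((1 + conc i) * (2 + conc j))"

definition mean_RR :: "nat \<Rightarrow> nat \<Rightarrow> real" where
  "mean_RR i j = 1 - 1 / (1 + conc i) - 1 / (1 + conc j) + mean_SS i j"

lemma integrable_S_mult: "1 \<le> i \<Longrightarrow> 1 \<le> j \<Longrightarrow> integrable M (\<lambda>\<omega>. S i c \<omega> * S j c \<omega>)"
  using S_bounds
  by (intro integrable_bounded_by_1 borel_measurable_times borel_measurable_S)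
     (auto simp: abs_mult intro: mult_le_one)

lemma integrable_S: "1 \<le> i \<Longrightarrow> integrable M (S i c)"
  using S_bounds by (intro integrable_bounded_by_1 borel_measurable_S) (auto simp: abs_le_iff)

lemma integral_compl_S_mult:
  assumes ij: "1 \<le> i" "i \<le> j" "j \<le> r"
  shows "(\<integral>\<omega>. (1 - S i c \<omega>) * (1 - S j c \<omega>) \<partial>M) = mean_RR i j"
proof -
  have "(\<lambda>\<omega>. (1 - S i c \<omega>) * (1 - S j c \<omega>)) = (\<lambda>\<omega>. 1 - S i c \<omega> - S j c \<omega> + S i c \<omega> * S j c \<omega>)"
    by (auto simp: algebra_simps)
  then show ?thesis using ij
    by (simp add: integral_add integral_diff integrable_S integrable_S_mult integral_S
        integral_S_mult mean_RR_def mean_SS_def prob_space)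
qed

lemma mean_RR_bounds:
  assumes ij: "1 \<le> i" "i \<le> j" "j \<le> r"
  shows "0 \<le> mean_RR i j" "mean_RR i j < 1"
proof -
  show "0 \<le> mean_RR i j"
    using integral_compl_S_mult[OF ij, of 0, symmetric] S_bounds[of i 0] S_bounds[of j 0]
    by (simp add: integral_nonneg_AE)
  have c: "0 < conc i" "0 < conc j" using conc_pos ij by auto
  have "2 / ((1 + conc i) * (2 + conc j)) = 1 / (1 + conc i) * (2 / (2 + conc j))" by simp
  also have "\<dots> \<le> 1 / (1 + conc i)" using c by (intro mult_right_le_one_le) auto
  moreover have "0 < 1 / (1 + conc j)" using c by simp
  ultimately have "2 / ((1 + conc i) * (2 + conc j)) < 1 / (1 + conc i) + 1 / (1 + conc j)"
    by linarith
  then show "mean_RR i j < 1" by (simp add: mean_RR_def mean_SS_def)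
qed

lemma integral_prod_columns_S:
  fixes h :: "nat \<Rightarrow> real \<Rightarrow> real \<Rightarrow> real"
  assumes ij: "1 \<le> i" "1 \<le> j" and K: "finite K"
    and h_bounded: "\<And>c u v. c \<in> K \<Longrightarrow> 0 \<le> u \<Longrightarrow> u \<le> 1 \<Longrightarrow> 0 \<le> v \<Longrightarrow> v \<le> 1 \<Longrightarrow> \<bar>h c u v\<bar> \<le> 1"
    and h_meas: "\<And>c. case_prod (h c) \<in> borel_measurable (borel \<Otimes>\<^sub>M borel)"
  shows "(\<integral>\<omega>. (\<Prod>c\<in>K. h c (S i c \<omega>) (S j c \<omega>)) \<partial>M) = (\<Prod>c\<in>K. \<integral>\<omega>. h c (S i c \<omega>) (S j c \<omega>) \<partial>M)"
  unfolding S_def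
proof (rule indep_vars_integral_prod_blocks[OF indep_vars_Y, where J=column
      and f="\<lambda>c x. h c (stick_frac r i c x) (stick_frac r j c x)"])
  show "(\<lambda>x. h c (stick_frac r i c x) (stick_frac r j c x)) \<in> borel_measurable (PiM (column c) (\<lambda>_. borel))" for c
    by (rule measurable_Pair_compose_split[OF h_meas borel_measurable_stick_frac_column borel_measurable_stick_frac_column])
       (use ij in auto)
  show "h c (stick_frac r i c (restrict y (column c))) (stick_frac r j c (restrict y (column c))) =
      h c (stick_frac r i c y) (stick_frac r j c y)" for c y
    using ij by (simp add: stick_frac_restrict_column)
  show "\<bar>h c (stick_frac r i c (\<lambda>t. Y t \<omega>)) (stick_frac r j c (\<lambda>t. Y t \<omega>))\<bar> \<le> 1" if "c \<in> K" for c \<omega>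
    unfolding S_def[symmetric] by (intro h_bounded that S_bounds)
qed (use K in \<open>auto simp: disjoint_family_column column_subset_coords\<close>)

lemma integral_survival:
  assumes "1 \<le> i" "i \<le> r"
  shows "(\<integral>\<omega>. (\<Prod>c<n. 1 - S i c \<omega>) \<partial>M) = (1 - 1 / (1 + conc i)) ^ n"
proof -
  have "(\<lambda>(u, v). 1 - u :: real) \<in> borel_measurable (borel \<Otimes>\<^sub>M borel)" by measurable
  then show ?thesis
    using integral_prod_columns_S[of i i "{..<n}" "\<lambda>_ u v. 1 - u"] assms
    by (simp add: integral_diff integrable_S integral_S prob_space abs_le_iff)
qed

lemma integral_W_mult:
  assumes ij: "1 \<le> i" "i \<le> j" "j \<le> r"
  shows "(\<integral>\<omega>. W i k \<omega> * W j k \<omega> \<partial>M) = mean_RR i j ^ k * mean_SS i j"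
proof -
  define h where "h c u v = (if c < k then (1 - u) * (1 - v) else u * v)" for c and u v :: real
  have "W i k \<omega> * W j k \<omega> = (\<Prod>c\<in>{..k}. h c (S i c \<omega>) (S j c \<omega>))" for \<omega>
    by (simp add: W_def stick_weight_def h_def lessThan_Suc_atMost[symmetric] prod.distrib[symmetric])
  moreover have "(\<integral>\<omega>. (\<Prod>c\<in>{..k}. h c (S i c \<omega>) (S j c \<omega>)) \<partial>M) = (\<Prod>c\<in>{..k}. \<integral>\<omega>. h c (S i c \<omega>) (S j c \<omega>) \<partial>M)"
  proof (rule integral_prod_columns_S)
    show "case_prod (h c) \<in> borel_measurable (borel \<Otimes>\<^sub>M borel)" for c
      unfolding h_def by measurable
  qed (use ij in \<open>auto simp: h_def abs_mult intro: mult_le_one\<close>)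
  moreover have "\<dots> = (\<Prod>c\<in>{..k}. if c < k then mean_RR i j else mean_SS i j)"
    using ij by (intro prod.cong refl) (auto simp: h_def integral_compl_S_mult integral_S_mult mean_SS_def)
  ultimately show ?thesis by (simp add: lessThan_Suc_atMost[symmetric])
qed

subsection \<open>The weights sum to one\<close>

lemma summable_W: "summable (\<lambda>k. W i k \<omega>)"
  unfolding W_def[abs_def] using S_bounds by (intro summable_stick_weight) auto

lemma sum_W: "(\<Sum>k<n. W i k \<omega>) = 1 - (\<Prod>c<n. 1 - S i c \<omega>)"
  by (simp add: W_def sum_stick_weight)

lemma suminf_W_bounds: "0 \<le> (\<Sum>k. W i k \<omega>)" "(\<Sum>k. W i k \<omega>) \<le> 1"
  unfolding W_def using suminf_stick_weight_bounds[of "\<lambda>c. S i c \<omega>"] S_bounds by auto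

lemma borel_measurable_suminf_W: "1 \<le> i \<Longrightarrow> (\<lambda>\<omega>. \<Sum>k. W i k \<omega>) \<in> borel_measurable M"
  by (intro borel_measurable_suminf borel_measurable_W)

lemma integral_sum_W:
  assumes i: "1 \<le> i" "i \<le> r"
  shows "(\<integral>\<omega>. (\<Sum>k<n. W i k \<omega>) \<partial>M) = 1 - (1 - 1 / (1 + conc i)) ^ n"
proof -
  have "integrable M (\<lambda>\<omega>. \<Prod>c<n. 1 - S i c \<omega>)"
    using i prod_one_minus_bounds[of "\<lambda>c. S i c \<omega>" for \<omega>] S_bounds
    by (intro integrable_bounded_by_1 borel_measurable_prod borel_measurable_diff
        borel_measurable_const borel_measurable_S) (auto simp: abs_le_iff)
  then show ?thesis using i by (simp add: sum_W integral_diff integral_survival prob_space)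
qed

lemma integral_suminf_W:
  assumes i: "1 \<le> i" "i \<le> r"
  shows "(\<integral>\<omega>. (\<Sum>k. W i k \<omega>) \<partial>M) = 1"
proof -
  have "(\<lambda>n. \<integral>\<omega>. (\<Sum>k<n. W i k \<omega>) \<partial>M) \<longlonglongrightarrow> (\<integral>\<omega>. (\<Sum>k. W i k \<omega>) \<partial>M)"
  proof (rule integral_dominated_convergence[where w="\<lambda>_. 1"])
    show "AE \<omega> in M. norm (\<Sum>k<n. W i k \<omega>) \<le> 1" for n
      unfolding W_def using S_bounds
      by (intro AE_I2) (simp add: abs_le_iff sum_nonneg stick_weight_nonneg sum_stick_weight_le_1)
  qed (use i in \<open>auto intro!: borel_measurable_sum borel_measurable_W borel_measurable_suminf_W
       intro: summable_LIMSEQ[OF summable_W]\<close>)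
  moreover have "(\<lambda>n. 1 - (1 - 1 / (1 + conc i)) ^ n) \<longlonglongrightarrow> 1"
    using conc_pos[OF i] by (intro tendsto_eq_intros LIMSEQ_power_zero) auto
  ultimately show ?thesis
    unfolding integral_sum_W[OF i] using LIMSEQ_unique by auto
qed

lemma AE_suminf_W_eq_1:
  assumes i: "1 \<le> i" "i \<le> r"
  shows "AE \<omega> in M. (\<Sum>k. W i k \<omega>) = 1"
proof -
  have "integrable M (\<lambda>\<omega>. 1 - (\<Sum>k. W i k \<omega>))"
    using i suminf_W_bounds
    by (intro integrable_bounded_by_1 borel_measurable_diff borel_measurable_const
        borel_measurable_suminf_W) (auto simp: abs_le_iff)
  moreover have "(\<integral>\<omega>. 1 - (\<Sum>k. W i k \<omega>) \<partial>M) = 0"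
    using i suminf_W_bounds
    by (simp add: integral_diff integral_suminf_W prob_space integrable_bounded_by_1
        borel_measurable_suminf_W abs_le_iff)
  ultimately have "AE \<omega> in M. 1 - (\<Sum>k. W i k \<omega>) = 0"
    using integral_nonneg_eq_0_iff_AE[where M=M] suminf_W_bounds by auto
  then show ?thesis by auto
qed

lemma integral_Y_Inr: "(\<integral>\<omega>. Y (Inr k) \<omega> \<partial>M) = p"
proof -
  have "(\<integral>\<omega>. indicator A (\<phi> k \<omega>) \<partial>M) = (\<integral>x. indicator A x \<partial>distr M H0 (\<phi> k) :: real)"
    by (rule integral_distr[symmetric]) (use \<phi>_meas A_sets in auto)
  moreover have "A \<inter> space H0 = A" using sets.sets_into_space[OF A_sets] by auto
  ultimately show ?thesis by (simp add: Y_def \<phi>_law p_def)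
qed

lemma integrable_Y_Inr: "integrable M (Y (Inr k))"
  using Y_bounds by (intro integrable_bounded_by_1 borel_measurable_Y_Inr) (auto simp: abs_le_iff)

lemma integral_Y_Inr_centered: "(\<integral>\<omega>. Y (Inr k) \<omega> - p \<partial>M) = 0"
  by (simp add: integral_diff integrable_Y_Inr integral_Y_Inr prob_space)

lemma integral_Y_Inr_centered_sq: "(\<integral>\<omega>. (Y (Inr k) \<omega> - p)\<^sup>2 \<partial>M) = p * (1 - p)"
proof -
  have "(\<lambda>\<omega>. (Y (Inr k) \<omega> - p)\<^sup>2) = (\<lambda>\<omega>. (1 - 2 * p) * Y (Inr k) \<omega> + p\<^sup>2)"
    by (auto simp: Y_def power2_eq_square algebra_simps indicator_def)
  then show ?thesis
    by (simp add: integrable_Y_Inr integral_Y_Inr prob_space power2_eq_square algebra_simps)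
qed


lemma integral_mult_centered_Y_Inr:
  assumes J: "J \<subseteq> coords" "Inr l \<notin> J" and f: "f \<in> borel_measurable (PiM J (\<lambda>_. borel))"
    and restr: "\<And>y. f (restrict y J) = f y" and bounded: "\<And>\<omega>. \<bar>f (\<lambda>t. Y t \<omega>)\<bar> \<le> 1"
  shows "(\<integral>\<omega>. f (\<lambda>t. Y t \<omega>) * (Y (Inr l) \<omega> - p) \<partial>M) = 0"
proof -
  have "(\<integral>\<omega>. f (\<lambda>t. Y t \<omega>) * (\<lambda>x. x (Inr l) - p) (\<lambda>t. Y t \<omega>) \<partial>M) =
      (\<integral>\<omega>. f (\<lambda>t. Y t \<omega>) \<partial>M) * (\<integral>\<omega>. (\<lambda>x. x (Inr l) - p) (\<lambda>t. Y t \<omega>) \<partial>M)"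
    by (rule indep_vars_integral_mult_blocks[OF indep_vars_Y, where J'="{Inr l}"])
       (use assms abs_Y_centered_le_1 in \<open>auto simp: Inr_in_coords restr[unfolded restrict_def]
          intro!: borel_measurable_diff measurable_component_singleton\<close>)
  then show ?thesis by (simp add: integral_Y_Inr_centered)
qed

lemma integral_W_centered:
  assumes "1 \<le> i"
  shows "(\<integral>\<omega>. W i k \<omega> * (Y (Inr k) \<omega> - p) \<partial>M) = 0"
  unfolding W_eq_coord_weight
proof (rule integral_mult_centered_Y_Inr[where J="columns_upto k"])
  show "coord_weight r i k \<in> borel_measurable (PiM (columns_upto k) (\<lambda>_. borel))"
    using assms by (rule borel_measurable_coord_weight_columns_upto) simp
  show "coord_weight r i k (restrict y (columns_upto k)) = coord_weight r i k y" for y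
    using assms by (rule coord_weight_restrict_columns_upto) simp
  show "\<bar>coord_weight r i k (\<lambda>t. Y t \<omega>)\<bar> \<le> 1" for \<omega>
    using W_bounds[of i k \<omega>] by (simp add: W_eq_coord_weight)
qed (simp_all add: columns_upto_subset_coords Inr_notin_columns_upto)

lemma integral_W_W_centered_off_diagonal:
  assumes ij: "1 \<le> i" "1 \<le> j" and kl: "k \<noteq> l"
  shows "(\<integral>\<omega>. (W i k \<omega> * W j l \<omega> * (Y (Inr k) \<omega> - p)) * (Y (Inr l) \<omega> - p) \<partial>M) = 0"
  unfolding W_eq_coord_weight
proof (rule integral_mult_centered_Y_Inr[where J="insert (Inr k) (columns_upto (max k l))"])
  let ?J = "insert (Inr k) (columns_upto (max k l))"
  have Inl_in_J: "Inl (m, c) \<in> ?J" if "1 \<le> i'" "m \<le> r - i'" "c \<le> k'" "k' \<le> max k l" for i' k' m c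
    using that by (auto intro: Inl_in_columns_upto)
  have "coord_weight r i' k' \<in> borel_measurable (PiM ?J (\<lambda>_. borel))" if "1 \<le> i'" "k' \<le> max k l" for i' k'
    using that Inl_in_J by (intro borel_measurable_coord_weight) blast
  then show "(\<lambda>x. coord_weight r i k x * coord_weight r j l x * (x (Inr k) - p)) \<in>
      borel_measurable (PiM ?J (\<lambda>_. borel))"
    using ij by (intro borel_measurable_times borel_measurable_diff measurable_component_singleton
        borel_measurable_const) auto
  have "coord_weight r i' k' (restrict y ?J) = coord_weight r i' k' y"
    if "1 \<le> i'" "k' \<le> max k l" for i' k' y
    using that Inl_in_J by (intro coord_weight_restrict) blast
  then show "coord_weight r i k (restrict y ?J) * coord_weight r j l (restrict y ?J) * (restrict y ?J (Inr k) - p) =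
      coord_weight r i k y * coord_weight r j l y * (y (Inr k) - p)" for y
    using ij by simp
  show "\<bar>coord_weight r i k (\<lambda>t. Y t \<omega>) * coord_weight r j l (\<lambda>t. Y t \<omega>) * (Y (Inr k) \<omega> - p)\<bar> \<le> 1" for \<omega>
    using W_bounds[of i k \<omega>] W_bounds[of j l \<omega>] abs_Y_centered_le_1[of k \<omega>]
    by (simp add: abs_mult flip: W_eq_coord_weight) (intro mult_le_one, auto)
qed (use kl in \<open>auto simp: columns_upto_subset_coords Inr_in_coords Inr_notin_columns_upto\<close>)

lemma integral_W_W_centered_sq:
  assumes ij: "1 \<le> i" "i \<le> j" "j \<le> r"
  shows "(\<integral>\<omega>. (W i k \<omega> * W j k \<omega>) * (Y (Inr k) \<omega> - p)\<^sup>2 \<partial>M) = mean_RR i j ^ k * mean_SS i j * (p * (1 - p))"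
proof -
  let ?f = "\<lambda>x. coord_weight r i k x * coord_weight r j k x" and ?g = "\<lambda>x. (x (Inr k) - p)\<^sup>2"
  have "(\<integral>\<omega>. ?f (\<lambda>t. Y t \<omega>) * ?g (\<lambda>t. Y t \<omega>) \<partial>M) = (\<integral>\<omega>. ?f (\<lambda>t. Y t \<omega>) \<partial>M) * (\<integral>\<omega>. ?g (\<lambda>t. Y t \<omega>) \<partial>M)"
  proof (rule indep_vars_integral_mult_blocks[OF indep_vars_Y, where J="columns_upto k" and J'="{Inr k}"])
    show "?f \<in> borel_measurable (PiM (columns_upto k) (\<lambda>_. borel))"
      using ij by (intro borel_measurable_times borel_measurable_coord_weight_columns_upto) auto
    show "?g \<in> borel_measurable (PiM {Inr k} (\<lambda>_. borel))"
      by (intro borel_measurable_power borel_measurable_diff measurable_component_singleton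
          borel_measurable_const) auto
    show "?f (restrict y (columns_upto k)) = ?f y" for y
      using ij by (simp add: coord_weight_restrict_columns_upto)
    show "\<bar>?f (\<lambda>t. Y t \<omega>)\<bar> \<le> 1" for \<omega>
      using W_bounds[of i k \<omega>] W_bounds[of j k \<omega>]
      by (simp add: abs_mult flip: W_eq_coord_weight) (intro mult_le_one, auto)
    show "\<bar>?g (\<lambda>t. Y t \<omega>)\<bar> \<le> 1" for \<omega>
      using abs_Y_centered_le_1[of k \<omega>] by (simp add: abs_square_le_1)
  qed (simp_all add: Inr_notin_columns_upto columns_upto_subset_coords Inr_in_coords)
  then show ?thesis
    using ij by (simp add: integral_W_mult integral_Y_Inr_centered_sq flip: W_eq_coord_weight)
qed

lemma abs_W_centered_le_1: "\<bar>W i k \<omega> * (Y (Inr k) \<omega> - p)\<bar> \<le> 1"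
  using W_bounds[of i k \<omega>] abs_Y_centered_le_1[of k \<omega>] by (auto simp: abs_mult intro: mult_le_one)

lemma summable_W_centered: "summable (\<lambda>k. W i k \<omega> * (Y (Inr k) \<omega> - p))"
  unfolding W_def[abs_def] using S_bounds abs_Y_centered_le_1
  by (intro summable_stick_weight_mult) auto

lemma abs_sum_W_centered_le_1: "\<bar>\<Sum>k<n. W i k \<omega> * (Y (Inr k) \<omega> - p)\<bar> \<le> 1"
  unfolding W_def[abs_def] using S_bounds abs_Y_centered_le_1
  by (intro abs_sum_stick_weight_mult_le_1) auto

lemma sums_D: "(\<lambda>k. W i k \<omega> * (Y (Inr k) \<omega> - p)) sums D i \<omega>"
  unfolding D_def using summable_W_centered by (rule summable_sums)

lemma abs_D_le_1: "\<bar>D i \<omega>\<bar> \<le> 1"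
  by (rule LIMSEQ_le_const2[OF tendsto_rabs[OF sums_D[unfolded sums_def]]])
     (use abs_sum_W_centered_le_1 in auto)

lemma borel_measurable_D: "1 \<le> i \<Longrightarrow> D i \<in> borel_measurable M"
  unfolding D_def[abs_def]
  by (intro borel_measurable_suminf borel_measurable_times borel_measurable_diff
      borel_measurable_W borel_measurable_Y_Inr borel_measurable_const)

lemma borel_measurable_G: "1 \<le> i \<Longrightarrow> G i \<in> borel_measurable M"
  unfolding G_def[abs_def]
  by (intro borel_measurable_suminf borel_measurable_times borel_measurable_W borel_measurable_Y_Inr)

lemma G_eq: "G i \<omega> = p * (\<Sum>k. W i k \<omega>) + D i \<omega>"
proof -
  have "(\<lambda>k. p * W i k \<omega> + W i k \<omega> * (Y (Inr k) \<omega> - p)) sums (p * (\<Sum>k. W i k \<omega>) + D i \<omega>)"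
    by (intro sums_add sums_mult summable_sums summable_W sums_D)
  then show ?thesis unfolding G_def by (simp add: algebra_simps sums_iff)
qed

lemma AE_G_eq: "1 \<le> i \<Longrightarrow> i \<le> r \<Longrightarrow> AE \<omega> in M. G i \<omega> = p + D i \<omega>"
  using AE_suminf_W_eq_1 by (auto simp: G_eq elim!: eventually_mono)

lemma integrable_D: "1 \<le> i \<Longrightarrow> integrable M (D i)"
  by (rule integrable_bounded_by_1[OF borel_measurable_D abs_D_le_1])

lemma integrable_W_centered: "1 \<le> i \<Longrightarrow> integrable M (\<lambda>\<omega>. W i k \<omega> * (Y (Inr k) \<omega> - p))"
  by (intro integrable_bounded_by_1 borel_measurable_times borel_measurable_diff borel_measurable_W
      borel_measurable_Y_Inr borel_measurable_const abs_W_centered_le_1)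

lemma integral_D: "1 \<le> i \<Longrightarrow> (\<integral>\<omega>. D i \<omega> \<partial>M) = 0"
proof -
  assume i: "1 \<le> i"
  have "(\<lambda>n. \<integral>\<omega>. (\<Sum>k<n. W i k \<omega> * (Y (Inr k) \<omega> - p)) \<partial>M) \<longlonglongrightarrow> (\<integral>\<omega>. D i \<omega> \<partial>M)"
    by (rule integral_dominated_convergence[where w="\<lambda>_. 1"])
       (use i abs_sum_W_centered_le_1 sums_D[unfolded sums_def]
         in \<open>auto intro!: borel_measurable_D borel_measurable_sum borel_measurable_times borel_measurable_diff
           borel_measurable_W borel_measurable_Y_Inr\<close>)
  moreover have "(\<integral>\<omega>. (\<Sum>k<n. W i k \<omega> * (Y (Inr k) \<omega> - p)) \<partial>M) = 0" for n
    using i by (simp add: integral_sum integrable_W_centered integral_W_centered)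
  ultimately show ?thesis by (simp add: LIMSEQ_const_iff)
qed

lemma integral_W_centered_mult:
  assumes ij: "1 \<le> i" "i \<le> j" "j \<le> r"
  shows "(\<integral>\<omega>. (W i k \<omega> * (Y (Inr k) \<omega> - p)) * (W j l \<omega> * (Y (Inr l) \<omega> - p)) \<partial>M) =
    (if l = k then mean_RR i j ^ k * mean_SS i j * (p * (1 - p)) else 0)"
proof (cases "l = k")
  case True
  then show ?thesis
    using integral_W_W_centered_sq[OF ij, of k] by (simp add: power2_eq_square mult_ac)
next
  case False
  then show ?thesis
    using integral_W_W_centered_off_diagonal[of i j k l] ij by (simp add: mult_ac)
qed

lemma integral_D_mult:
  assumes ij: "1 \<le> i" "i \<le> j" "j \<le> r"
  shows "(\<integral>\<omega>. D i \<omega> * D j \<omega> \<partial>M) = p * (1 - p) * (mean_SS i j / (1 - mean_RR i j))"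
proof -
  let ?a = "\<lambda>i k \<omega>. W i k \<omega> * (Y (Inr k) \<omega> - p)"
  let ?v = "mean_SS i j * (p * (1 - p))"
  have "integrable M (\<lambda>\<omega>. ?a i k \<omega> * ?a j l \<omega>)" for k l
    using ij abs_W_centered_le_1
    by (intro integrable_bounded_by_1)
       (auto simp: abs_mult intro!: borel_measurable_times borel_measurable_diff borel_measurable_W
         borel_measurable_Y_Inr intro: mult_le_one)
  then have partial: "(\<integral>\<omega>. (\<Sum>k<n. ?a i k \<omega>) * (\<Sum>l<n. ?a j l \<omega>) \<partial>M) = (\<Sum>k<n. mean_RR i j ^ k * ?v)"
    for n using ij by (simp add: sum_product integral_sum integral_W_centered_mult; simp add: mult.assoc)
  have "(\<lambda>n. \<integral>\<omega>. (\<Sum>k<n. ?a i k \<omega>) * (\<Sum>l<n. ?a j l \<omega>) \<partial>M) \<longlonglongrightarrow> (\<integral>\<omega>. D i \<omega> * D j \<omega> \<partial>M)"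
  proof (rule integral_dominated_convergence[where w="\<lambda>_. 1"])
    show "AE \<omega> in M. norm ((\<Sum>k<n. ?a i k \<omega>) * (\<Sum>l<n. ?a j l \<omega>)) \<le> 1" for n
      using abs_sum_W_centered_le_1 by (intro AE_I2) (auto simp: abs_mult intro: mult_le_one)
  qed (use ij sums_D[unfolded sums_def]
       in \<open>auto intro!: borel_measurable_times borel_measurable_D borel_measurable_sum
         borel_measurable_diff borel_measurable_W borel_measurable_Y_Inr tendsto_mult\<close>)
  moreover have "(\<lambda>n. \<Sum>k<n. mean_RR i j ^ k * ?v) \<longlonglongrightarrow> 1 / (1 - mean_RR i j) * ?v"
    using sums_mult2[OF geometric_sums, of "mean_RR i j" ?v] mean_RR_bounds[OF ij]
    by (simp add: sums_def)
  ultimately show ?thesis unfolding partial using LIMSEQ_unique by fastforce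
qed

lemma integral_G: "1 \<le> i \<Longrightarrow> i \<le> r \<Longrightarrow> (\<integral>\<omega>. G i \<omega> \<partial>M) = p"
proof -
  assume i: "1 \<le> i" "i \<le> r"
  have "(\<integral>\<omega>. G i \<omega> \<partial>M) = (\<integral>\<omega>. p + D i \<omega> \<partial>M)"
    using i AE_G_eq[OF i]
    by (intro integral_cong_AE) (auto intro!: borel_measurable_add borel_measurable_D intro: borel_measurable_G)
  also have "\<dots> = p" using i by (simp add: integral_add integrable_D integral_D prob_space)
  finally show ?thesis .
qed

lemma covariance_G:
  assumes ij: "1 \<le> i" "i \<le> j" "j \<le> r"
  shows "(\<integral>\<omega>. (G i \<omega> - (\<integral>\<omega>'. G i \<omega>' \<partial>M)) * (G j \<omega> - (\<integral>\<omega>'. G j \<omega>' \<partial>M)) \<partial>M) =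
    p * (1 - p) * (mean_SS i j / (1 - mean_RR i j))"
proof -
  have "AE \<omega> in M. (G i \<omega> - (\<integral>\<omega>'. G i \<omega>' \<partial>M)) * (G j \<omega> - (\<integral>\<omega>'. G j \<omega>' \<partial>M)) = D i \<omega> * D j \<omega>"
    using AE_G_eq[of i] AE_G_eq[of j] ij by (auto simp: integral_G)
  then have "(\<integral>\<omega>. (G i \<omega> - (\<integral>\<omega>'. G i \<omega>' \<partial>M)) * (G j \<omega> - (\<integral>\<omega>'. G j \<omega>' \<partial>M)) \<partial>M) =
      (\<integral>\<omega>. D i \<omega> * D j \<omega> \<partial>M)"
    using ij by (intro integral_cong_AE)
      (auto intro!: borel_measurable_times borel_measurable_diff borel_measurable_G borel_measurable_D)
  then show ?thesis using integral_D_mult[OF ij] by simp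
qed

lemma covariance_ratio_closed_form:
  assumes "1 \<le> i" "i \<le> j" "j \<le> r"
  shows "mean_SS i j / (1 - mean_RR i j) =
    2 * (1 + conc j) / (2 * (1 + conc j)\<^sup>2 + (2 + conc j) * (conc i - conc j))"
  unfolding mean_RR_def mean_SS_def using assms conc_pos by (intro stick_covariance_ratio) auto

lemma variance_ratio_closed_form:
  assumes "1 \<le> i" "i \<le> r"
  shows "mean_SS i i / (1 - mean_RR i i) = 1 / (1 + conc i)"
proof -
  have "mean_SS i i / (1 - mean_RR i i) =
      2 * (1 + conc i) / (2 * (1 + conc i)\<^sup>2 + (2 + conc i) * (conc i - conc i))"
    by (rule covariance_ratio_closed_form) (use assms in auto)
  also have "\<dots> = (2 * (1 + conc i)) / ((2 * (1 + conc i)) * (1 + conc i))"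
    by (simp only: diff_self mult_zero_right add_0_right power2_eq_square mult.assoc)
  also have "\<dots> = 1 / (1 + conc i)"
    using conc_pos[OF assms] by (intro nonzero_divide_mult_cancel_left) simp
  finally show ?thesis .
qed

lemma correlation_G:
  assumes ij: "1 \<le> i" "i < j" "j \<le> r" and p: "0 < p" "p < 1"
  shows "correlation M (G i) (G j) =
    2 * sqrt (1 + conc i) * (1 + conc j) powr (3/2) /
      (2 * (1 + conc j)\<^sup>2 + (2 + conc j) * (conc i - conc j))"
proof -
  have "correlation M (G i) (G j) = (p * (1 - p) * (mean_SS i j / (1 - mean_RR i j))) /
      sqrt ((p * (1 - p) * (mean_SS i i / (1 - mean_RR i i))) *
        (p * (1 - p) * (mean_SS j j / (1 - mean_RR j j))))"
    unfolding correlation_def using ij by (simp only: covariance_G power2_eq_square)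
  also have "\<dots> = 2 * sqrt (1 + conc i) * (1 + conc j) powr (3/2) /
      (2 * (1 + conc j)\<^sup>2 + (2 + conc j) * (conc i - conc j))"
  proof -
    have "mean_SS i j / (1 - mean_RR i j) =
        2 * (1 + conc j) / (2 * (1 + conc j)\<^sup>2 + (2 + conc j) * (conc i - conc j))"
      using ij by (intro covariance_ratio_closed_form) auto
    moreover have "mean_SS i i / (1 - mean_RR i i) = 1 / (1 + conc i)"
      "mean_SS j j / (1 - mean_RR j j) = 1 / (1 + conc j)"
      using ij by (auto intro: variance_ratio_closed_form)
    ultimately show ?thesis
      using ij p conc_pos[of i] conc_pos[of j] by (simp only:) (rule correlation_closed_form, auto)
  qed
  finally show ?thesis .
qed

lemma AE_G_meas_eq_G:
  assumes "1 \<le> i"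
  shows "AE \<omega> in M. G_meas r V \<phi> i A \<omega> = G i \<omega>"
proof -
  have "AE \<omega> in M. \<forall>mk \<in> {..<r} \<times> UNIV. 0 < V (fst mk) (snd mk) \<omega> \<and> V (fst mk) (snd mk) \<omega> < 1"
    using distributed_beta_AE_in_unit_interval[OF V_beta]
    by (subst AE_ball_countable) auto
  then show ?thesis
  proof eventually_elim
    case (elim \<omega>)
    have "stick_S r V i k \<omega> = S i k \<omega>" for k
      unfolding stick_S_def S_def stick_frac_def
      using elim assms r_pos by (intro prod.cong refl) (auto simp: Y_def clamp01_def)
    then show ?case by (simp add: G_meas_def G_def W_def stick_W_eq_stick_weight Y_def)
  qed
qed

lemma borel_measurable_G_meas: "1 \<le> i \<Longrightarrow> G_meas r V \<phi> i A \<in> borel_measurable M"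
  unfolding G_meas_def[abs_def] stick_W_eq_stick_weight stick_S_def
  using r_pos
  by (intro borel_measurable_suminf borel_measurable_times borel_measurable_stick_weight
      borel_measurable_prod V_meas measurable_compose[OF \<phi>_meas borel_measurable_indicator[OF A_sets]]) auto

end

theorem mainTheorem6:
  fixes M :: "'a measure"
    and H0 :: "'b::polish_space measure"
    and r :: nat
    and \<alpha> :: "nat \<Rightarrow> real"
    and V :: "nat \<Rightarrow> nat \<Rightarrow> 'a \<Rightarrow> real"
    and \<phi> :: "nat \<Rightarrow> 'a \<Rightarrow> 'b"
    and i j :: nat
    and A :: "'b set"
  assumes "prob_space M"
    and "r \<ge> 2"
    and \<alpha>_pos: "\<And>l. l \<in> {1..r} \<Longrightarrow> \<alpha> l > 0"
    and H0: "prob_space H0" "sets H0 = sets borel"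
    and V_meas: "\<And>m k. m < r \<Longrightarrow> V m k \<in> borel_measurable M"
    and V_beta: "\<And>m k. m < r \<Longrightarrow>
        distributed M lborel (V m k)
          (\<lambda>x. ennreal (beta_density (1 + (\<Sum>l=1..m. \<alpha> l)) (\<alpha> (m + 1)) x))"
    and \<phi>_meas: "\<And>k. \<phi> k \<in> measurable M H0"
    and \<phi>_law: "\<And>k. distr M H0 (\<phi> k) = H0"
    and indep: "prob_space.indep_sets M
        (case_sum
           (\<lambda>(m, k). sigma_sets (space M) {V m k -` B \<inter> space M | B. B \<in> sets borel})
           (\<lambda>k. sigma_sets (space M) {\<phi> k -` B \<inter> space M | B. B \<in> sets H0}))
        (({..<r} \<times> UNIV) <+> UNIV)"
    and ij: "1 \<le> i" "i < j" "j \<le> r"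
    and A: "A \<in> sets H0" "0 < measure H0 A" "measure H0 A < 1"
  shows "correlation M (G_meas r V \<phi> i A) (G_meas r V \<phi> j A) =
     2 * sqrt (1 + (\<Sum>l=1..r-i+1. \<alpha> l)) * (1 + (\<Sum>l=1..r-j+1. \<alpha> l)) powr (3/2)
     / (2 * (1 + (\<Sum>l=1..r-j+1. \<alpha> l))\<^sup>2
        + (2 + (\<Sum>l=1..r-j+1. \<alpha> l)) * (\<Sum>l=r-j+2..r-i+1. \<alpha> l))"
proof -
  interpret dependent_stick_breaking M H0 r \<alpha> V \<phi> A
    by (intro dependent_stick_breaking.intro dependent_stick_breaking_axioms.intro) (use assms in auto)
  have "correlation M (G_meas r V \<phi> i A) (G_meas r V \<phi> j A) = correlation M (G i) (G j)"
    using ij by (intro correlation_cong_AE borel_measurable_G_meas borel_measurable_G AE_G_meas_eq_G) auto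
  also have "\<dots> = 2 * sqrt (1 + conc i) * (1 + conc j) powr (3/2) /
      (2 * (1 + conc j)\<^sup>2 + (2 + conc j) * (conc i - conc j))"
    using ij A by (intro correlation_G) (auto simp: p_def)
  also have "conc i - conc j = (\<Sum>l=r-j+2..r-i+1. \<alpha> l)"
    using ij by (intro conc_diff) auto
  finally show ?thesis by (simp only: conc_eq)
qed

end
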